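(* Suppose $\mathcal S$ satisfies Tuy's condition with respect to $M$. Then the canonical relation $C_I$ satisfies: (1) the maps $C_I\to M$ and $C_I\to\mathcal M$ (base projections) have surjective differentials; (2) the projections $\pi_M:C_I\to T^*M$ and $\pi_{\mathcal M}:C_I\to T^*\mathcal M$ have constant rank. Moreover $\mathrm{rank}(d\pi_M)-\dim M=\mathrm{rank}(d\pi_{\mathcal M})-\dim\mathcal M=3$.
   Context: Standing setup. $M\subset\mathbb R^3$ is an open domain and $\mathcal S\subset\mathbb R^3$ is a smooth regular embedded surface without boundary lying at positive distance from $\overline M$. Fix $0\le\epsilon<\pi/4$, $\mathcal M=\mathcal S\times S^2\times(\epsilon,\pi/2-\epsilon)$ (dimension 5). Let $\varphi(u,\beta,\phi,z)=(z-u)\cdot\beta-|z-u|\cos\phi$. Coordinates: $u=u(v^1,v^2)$ locally on $\mathcal S$, $J_1=(\partial_{v^1}u,\partial_{v^2}u)$; $\beta=(\sin\theta\cos\psi,\sin\theta\sin\psi,\cos\theta)$, $J_2=(\partial_\theta\beta,\partial_\psi\beta)$; covectors on $\mathcal M$ are $(\hat u,\hat\beta,\hat\phi)$. Canonical relation: $C_I=\{(u,\beta,\phi,\hat u,\hat\beta,\hat\phi;z,\zeta):\varphi=0,\ \lambda\neq0,\ \zeta=-\lambda(\beta-\frac{z-u}{|z-u|}\cos\phi),\ \hat u=J_1^T\zeta,\ \hat\beta=\lambda J_2^T(z-u),\ \hat\phi=\lambda|z-u|\sin\phi\}$; $\pi_M,\pi_{\mathcal M}$ are the natural projections to $T^*M$,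 $T^*\mathcal M$. Accessibility / Tuy's condition: for $(z,\zeta)\in T^*M\setminus0$, $H_{(z,\zeta)}=\{y:(y-z)\cdot\zeta=0\}$; $(z,\zeta)$ is accessible if $H_{(z,\zeta)}\cap\mathcal S\neq\emptyset$ and for every $u\in H_{(z,\zeta)}\cap\mathcal S$, $\zeta$ is not orthogonal to $T_u\mathcal S$; Tuy's condition means every $(z,\zeta)\in T^*M\setminus0$ is accessible. *)

theory Defs
  imports "HOL-Analysis.Analysis"
begin

fun iter_pd :: "'n::finite list \<Rightarrow> (real^'n \<Rightarrow> 'b::real_normed_vector) \<Rightarrow> real^'n \<Rightarrow> 'b" where
  "iter_pd [] f = f"
| "iter_pd (i # is) f = (\<lambda>x. frechet_derivative (iter_pd is f) (at x) (axis i 1))"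

definition smooth_on :: "(real^'n::finite) set \<Rightarrow> (real^'n \<Rightarrow> 'b::real_normed_vector) \<Rightarrow> bool" where
  "smooth_on U f \<longleftrightarrow> open U \<and> (\<forall>is. \<forall>x\<in>U. iter_pd is f differentiable (at x))"

definition surface_chart :: "(real^3) set \<Rightarrow> (real^2) set \<Rightarrow> (real^2 \<Rightarrow> real^3) \<Rightarrow> bool" where
  "surface_chart S U u \<longleftrightarrow> open U \<and> smooth_on U u \<and> u ` U \<subseteq> S
     \<and> openin (top_of_set S) (u ` U)
     \<and> (\<exists>g. homeomorphism U (u ` U) u g)
     \<and> (\<forall>v\<in>U. inj (frechet_derivative u (at v)))"

definition regular_surface :: "(real^3) set \<Rightarrow> bool" where
  "regular_surface S \<longleftrightarrow> (\<forall>x\<in>S. \<exists>U u. surface_chart S U u \<and> x \<in> u ` U)"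

text \<open>Tangent vectors of a set A at x: velocities at 0 of curves through x lying in A.
  For a C^1 submanifold this is exactly the tangent space.\<close>
definition tangent_vectors :: "'a::real_normed_vector set \<Rightarrow> 'a \<Rightarrow> 'a set" where
  "tangent_vectors A x = {w. \<exists>\<gamma> e. e > 0 \<and> \<gamma> 0 = x \<and> (\<forall>t. \<bar>t\<bar> < e \<longrightarrow> \<gamma> t \<in> A)
       \<and> (\<gamma> has_vector_derivative w) (at 0)}"

definition hyperplane_H :: "real^3 \<Rightarrow> real^3 \<Rightarrow> (real^3) set" where
  "hyperplane_H z \<zeta> = {y. (y - z) \<bullet> \<zeta> = 0}"

definition accessible :: "(real^3) set \<Rightarrow> real^3 \<Rightarrow> real^3 \<Rightarrow> bool" where
  "accessible S z \<zeta> \<longleftrightarrow> hyperplane_H z \<zeta> \<inter> S \<noteq> {}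
     \<and> (\<forall>u \<in> hyperplane_H z \<zeta> \<inter> S. \<not> (\<forall>t \<in> tangent_vectors S u. \<zeta> \<bullet> t = 0))"

definition tuy_condition :: "(real^3) set \<Rightarrow> (real^3) set \<Rightarrow> bool" where
  "tuy_condition S M \<longleftrightarrow> (\<forall>z\<in>M. \<forall>\<zeta>. \<zeta> \<noteq> 0 \<longrightarrow> accessible S z \<zeta>)"

definition phase :: "real^3 \<Rightarrow> real^3 \<Rightarrow> real \<Rightarrow> real^3 \<Rightarrow> real" where
  "phase u \<beta> \<phi> z = (z - u) \<bullet> \<beta> - norm (z - u) * cos \<phi>"

definition JT :: "(real^2 \<Rightarrow> real^3) \<Rightarrow> real^2 \<Rightarrow> real^3 \<Rightarrow> real^2" where
  "JT f v y = (\<chi> i. frechet_derivative f (at v) (axis i 1) \<bullet> y)"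

text \<open>The canonical relation C_I written in local coordinates: a chart u on U of S
  (coordinates v) and a chart b on W of the unit sphere (coordinates w), phi the
  third coordinate of the 5-manifold. Points are
  ((v,w,phi), (uhat,betahat,phihat), (z,zeta)), i.e. point of T*calM then point of T*M.\<close>
definition CI_coords :: "(real^3) set \<Rightarrow> real \<Rightarrow> (real^2) set \<Rightarrow> (real^2 \<Rightarrow> real^3)
     \<Rightarrow> (real^2) set \<Rightarrow> (real^2 \<Rightarrow> real^3)
     \<Rightarrow> ((((real^2) \<times> (real^2) \<times> real) \<times> ((real^2) \<times> (real^2) \<times> real)) \<times> ((real^3) \<times> (real^3))) set" where
  "CI_coords M \<epsilon> U u W b =
    {(((v, w, \<phi>), (uh, bh, \<phi>h)), (z, \<zeta>)) | v w \<phi> uh bh \<phi>h z \<zeta> lam.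
       v \<in> U \<and> w \<in> W \<and> \<phi> \<in> {\<epsilon> <..< pi/2 - \<epsilon>} \<and> z \<in> M \<and>
       phase (u v) (b w) \<phi> z = 0 \<and> lam \<noteq> 0 \<and>
       \<zeta> = - lam *\<^sub>R (b w - (cos \<phi> / norm (z - u v)) *\<^sub>R (z - u v)) \<and>
       uh = JT u v \<zeta> \<and>
       bh = lam *\<^sub>R JT b w (z - u v) \<and>
       \<phi>h = lam * norm (z - u v) * sin \<phi>}"

end

theory Submission
  imports Defs
begin

text \<open>Near any of its points, \<open>C_I\<close> is the image of the parameters \<open>(v, w, \<lambda>, z)\<close>: the phase
  equation fixes \<open>\<phi>\<close> as the angle between \<open>z - u\<close> and \<open>\<beta>\<close>, and every other coordinate is an
  explicit function of these. This parametrization has a differentiable left inverse on \<open>C_I\<close>, so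
  the tangent space of \<open>C_I\<close> is the range of its derivative \<open>F'\<close>, and the rank statements become
  linear algebra for \<open>F'\<close>. The projections to \<open>z\<close> and to \<open>(v, w, \<phi>)\<close> are visibly onto.
  With \<open>z\<close> frozen, \<open>\<lambda>\<close> and \<open>w\<close> move \<open>\<zeta>\<close> in two independent directions orthogonal to
  \<open>z - u\<close>, and \<open>v\<close> moves it off that plane exactly when \<open>J\<^sub>1\<^sup>T \<zeta> \<noteq> 0\<close>; so the projection to
  \<open>T*M\<close> has rank 6. That inequality is Tuy's condition: \<open>\<zeta> \<perp> z - u\<close> puts \<open>u\<close> on the
  hyperplane \<open>H(z, \<zeta>)\<close>, so \<open>\<zeta>\<close> is not normal to \<open>S\<close> at \<open>u\<close>. Together with the injectivity of
  the chart derivatives it also makes the projection to \<open>T*\<M>\<close> injective, hence of rank 8.\<close>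

lemma has_derivative_norm_compose[derivative_intros]:
  assumes "(f has_derivative f') (at x within s)" "f x \<noteq> 0"
  shows "((\<lambda>y. norm (f y)) has_derivative (\<lambda>h. sgn (f x) \<bullet> f' h)) (at x within s)"
  using has_derivative_compose[OF assms(1) has_derivative_norm[OF assms(2)]]
  by (simp add: o_def inner_commute)

lemma has_derivative_compose_fst:
  "(f has_derivative f') (at (fst p)) \<Longrightarrow>
   ((\<lambda>q. f (fst q)) has_derivative (\<lambda>h. f' (fst h))) (at p within s)"
  using has_derivative_compose[OF has_derivative_fst[OF has_derivative_ident], of f f' p s]
  by (auto simp: o_def intro: has_derivative_at_withinI)

lemma has_derivative_compose_fst_snd:
  "(f has_derivative f') (at (fst (snd p))) \<Longrightarrow>
   ((\<lambda>q. f (fst (snd q))) has_derivative (\<lambda>h. f' (fst (snd h)))) (at p within s)"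
  using has_derivative_compose[OF has_derivative_fst[OF has_derivative_snd[OF has_derivative_ident]], of f f' p s]
  by (auto simp: o_def intro: has_derivative_at_withinI)

lemma has_derivative_component_unique:
  assumes "(f has_derivative f') (at x)" "bounded_linear g"
    and "((\<lambda>y. g (f y)) has_derivative G) (at x)"
  shows "g (f' h) = G h"
proof -
  have "((\<lambda>y. g (f y)) has_derivative (\<lambda>h. g (f' h))) (at x)"
    using has_derivative_compose[OF assms(1) bounded_linear_imp_has_derivative[OF assms(2)]]
    by (simp add: o_def)
  from has_derivative_unique[OF this assms(3)] show ?thesis by (rule fun_cong)
qed

lemma isCont_eventually_in_open:
  assumes "isCont f x" "open A" "f x \<in> A"
  shows "\<forall>\<^sub>F y in nhds x. f y \<in> A"
proof -
  have "(f \<longlongrightarrow> f x) (nhds x)"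
    using assms(1) unfolding isCont_def tendsto_at_iff_tendsto_nhds .
  from topological_tendstoD[OF this assms(2,3)] show ?thesis .
qed

lemma derivative_injective_imp_bounded_below_near:
  fixes f :: "'a::real_normed_vector \<Rightarrow> 'b::euclidean_space"
  assumes "(f has_derivative L) (at x)" "inj L"
  obtains m where "m > 0" "\<forall>\<^sub>F y in nhds x. m * norm (y - x) \<le> norm (f y - f x)"
proof -
  have "linear L" using has_derivative_linear assms(1) by blast
  then obtain B where B: "B > 0" "\<And>h. B * norm h \<le> norm (L h)"
    using linear_inj_bounded_below_pos assms(2) by blast
  have "\<forall>e>0. \<exists>d>0. \<forall>y. norm (y - x) < d \<longrightarrow> norm (f y - f x - L (y - x)) \<le> e * norm (y - x)"
    using assms(1) unfolding has_derivative_at_alt by blast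
  from this[rule_format, of "B/2"] B(1) obtain d where d: "d > 0"
    "\<And>y. norm (y - x) < d \<Longrightarrow> norm (f y - f x - L (y - x)) \<le> B/2 * norm (y - x)"
    by auto
  have "B/2 * norm (y - x) \<le> norm (f y - f x)" if "norm (y - x) < d" for y
  proof -
    have "B * norm (y - x) \<le> norm (f y - f x) + norm (f y - f x - L (y - x))"
      using B(2)[of "y - x"] norm_triangle_ineq4[of "f y - f x" "f y - f x - L (y - x)"] by simp
    thus ?thesis using d(2)[OF that] by simp
  qed
  hence "\<forall>\<^sub>F y in nhds x. B/2 * norm (y - x) \<le> norm (f y - f x)"
    unfolding eventually_nhds_metric using d(1) by (metis dist_norm)
  thus ?thesis using that B(1) half_gt_zero by blast
qed

lemma range_derivative_subset_tangent_vectors: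
  assumes f: "(f has_derivative f') (at x)" and A: "\<forall>\<^sub>F y in nhds x. f y \<in> A"
  shows "range f' \<subseteq> tangent_vectors A (f x)"
proof
  fix w assume "w \<in> range f'"
  then obtain h where w: "w = f' h" by blast
  obtain d where d: "d > 0" "\<And>y. dist y x < d \<Longrightarrow> f y \<in> A"
    using A unfolding eventually_nhds_metric by blast
  define \<gamma> where "\<gamma> t = f (x + t *\<^sub>R h)" for t
  have "((\<lambda>t. x + t *\<^sub>R h) has_derivative (\<lambda>t. t *\<^sub>R h)) (at 0)"
    by (auto intro!: derivative_eq_intros)
  from has_derivative_compose[OF this, of f f'] f
  have "(\<gamma> has_derivative (\<lambda>t. f' (t *\<^sub>R h))) (at 0)" by (simp add: o_def \<gamma>_def[abs_def])
  hence der: "(\<gamma> has_vector_derivative w) (at 0)"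
    unfolding has_vector_derivative_def w
    using has_derivative_linear[OF f] by (simp add: linear_scale)
  define e where "e = d / (norm h + 1)"
  have pos: "norm h + 1 > 0" using norm_ge_zero[of h] by linarith
  have "e > 0" unfolding e_def using d(1) pos by simp
  have mem: "\<gamma> t \<in> A" if "\<bar>t\<bar> < e" for t
  proof -
    have "\<bar>t\<bar> * (norm h + 1) < d" using that pos by (simp add: e_def pos_less_divide_eq)
    hence "\<bar>t\<bar> * norm h < d" using abs_ge_zero[of t] by (simp add: distrib_left)
    thus ?thesis using d(2) unfolding \<gamma>_def by (simp add: dist_norm)
  qed
  have "\<gamma> 0 = f x" unfolding \<gamma>_def by simp
  with der mem \<open>e > 0\<close> show "w \<in> tangent_vectors A (f x)"
    unfolding tangent_vectors_def by blast
qed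

lemma tangent_vectors_subset_range_derivative:
  assumes f: "(f has_derivative f') (at x)" and g: "(g has_derivative g') (at (f x))"
    and gf: "g (f x) = x" and fg: "\<And>y. y \<in> A \<Longrightarrow> f (g y) = y"
  shows "tangent_vectors A (f x) \<subseteq> range f'"
proof
  fix w assume "w \<in> tangent_vectors A (f x)"
  then obtain \<gamma> e where \<gamma>: "e > 0" "\<gamma> 0 = f x" "\<And>t. \<bar>t\<bar> < e \<Longrightarrow> \<gamma> t \<in> A"
      "(\<gamma> has_derivative (\<lambda>t. t *\<^sub>R w)) (at 0)"
    unfolding tangent_vectors_def has_vector_derivative_def by blast
  have "((\<lambda>t. f (g (\<gamma> t))) has_derivative (\<lambda>t. f' (g' (t *\<^sub>R w)))) (at 0)"
    using has_derivative_compose[OF has_derivative_compose[OF \<gamma>(4), of g g'] , of f f'] f g \<gamma>(2) gf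
    by (simp add: o_def)
  moreover have "((\<lambda>t. f (g (\<gamma> t))) has_derivative (\<lambda>t. t *\<^sub>R w)) (at 0)"
    by (rule has_derivative_transform_within_open[OF \<gamma>(4), of "ball 0 e"])
       (use \<gamma>(1,3) fg in auto)
  ultimately have "f' (g' (1 *\<^sub>R w)) = 1 *\<^sub>R w"
    using has_derivative_unique by metis
  thus "w \<in> range f'" by (metis scaleR_one rangeI)
qed

lemma span_triple_eq_UNIV:
  fixes a w1 w2 w3 :: "real^3"
  assumes "a \<bullet> w1 = 0" "a \<bullet> w2 = 0" "w1 \<bullet> w2 = 0" "w1 \<noteq> 0" "w2 \<noteq> 0" "a \<bullet> w3 \<noteq> 0"
  shows "span {w1, w2, w3} = UNIV"
proof -
  have ind: "independent {w1, w2}"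
    using assms(3-5) by (intro pairwise_orthogonal_independent) (auto simp: pairwise_def orthogonal_def inner_commute)
  have "w3 \<notin> span {w1, w2}"
  proof
    assume "w3 \<in> span {w1, w2}"
    hence "orthogonal a w3" by (rule orthogonal_to_span) (use assms(1,2) in \<open>auto simp: orthogonal_def\<close>)
    thus False using assms(6) by (simp add: orthogonal_def)
  qed
  hence indep: "independent {w3, w1, w2}" using ind by (rule independent_insertI)
  have "w1 \<noteq> w2"
  proof
    assume "w1 = w2"
    with assms(3,4) show False by simp
  qed
  moreover have "w3 \<noteq> w1" "w3 \<noteq> w2" using assms(1,2,6) by auto
  ultimately have "card {w3, w1, w2} = 3" by simp
  with indep have "UNIV \<subseteq> span {w3, w1, w2}" by (intro card_ge_dim_independent) auto
  moreover have "{w1, w2, w3} = {w3, w1, w2}" by blast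
  ultimately show ?thesis by auto
qed

lemma surface_chart_has_derivative:
  assumes "surface_chart S U u" "v \<in> U"
  shows "(u has_derivative frechet_derivative u (at v)) (at v)"
proof -
  have "iter_pd [] u differentiable (at v)"
    using assms unfolding surface_chart_def smooth_on_def by blast
  thus ?thesis by (simp add: frechet_derivative_works)
qed

lemma surface_chart_partial_has_derivative:
  assumes "surface_chart S U u" "v \<in> U"
  shows "((\<lambda>v. frechet_derivative u (at v) (axis i 1)) has_derivative
           frechet_derivative (\<lambda>v. frechet_derivative u (at v) (axis i 1)) (at v)) (at v)"
proof -
  have "iter_pd [i] u differentiable (at v)"
    using assms unfolding surface_chart_def smooth_on_def by blast
  thus ?thesis by (simp add: frechet_derivative_works)
qed

lemma has_derivative_at_0_eventually_norm_le:
  assumes "(\<gamma> has_derivative (\<lambda>t. t *\<^sub>R w)) (at 0)"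
  shows "\<forall>\<^sub>F t in nhds 0. norm (\<gamma> t - \<gamma> 0) \<le> (norm w + 1) * \<bar>t\<bar>"
proof -
  have "\<forall>e>0. \<exists>d>0. \<forall>t. norm (t - 0) < d \<longrightarrow> norm (\<gamma> t - \<gamma> 0 - (t - 0) *\<^sub>R w) \<le> e * norm (t - 0)"
    using assms unfolding has_derivative_at_alt by blast
  from this[rule_format, of 1] obtain d where d: "d > 0"
    "\<And>t. norm (t - 0) < d \<Longrightarrow> norm (\<gamma> t - \<gamma> 0 - (t - 0) *\<^sub>R w) \<le> 1 * norm (t - 0)"
    by auto
  have "norm (\<gamma> t - \<gamma> 0) \<le> (norm w + 1) * \<bar>t\<bar>" if "\<bar>t\<bar> < d" for t
    using d(2)[of t] that norm_triangle_ineq[of "\<gamma> t - \<gamma> 0 - t *\<^sub>R w" "t *\<^sub>R w"]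
    by (simp add: algebra_simps)
  thus ?thesis unfolding eventually_nhds_metric using d(1) by (auto simp: dist_real_def)
qed

lemma surface_chart_pullback_curve:
  assumes ch: "surface_chart S U u" and v0: "v0 \<in> U"
    and \<gamma>: "isCont \<gamma> 0" "\<gamma> 0 = u v0" "\<forall>\<^sub>F t in nhds 0. \<gamma> t \<in> S"
  obtains c where "\<forall>\<^sub>F t in nhds 0. u (c t) = \<gamma> t" and "(c \<longlongrightarrow> v0) (nhds 0)"
proof -
  obtain g where "homeomorphism U (u ` U) u g" using ch unfolding surface_chart_def by blast
  hence g: "continuous_on (u ` U) g" "g (u v0) = v0" "\<And>y. y \<in> u ` U \<Longrightarrow> u (g y) = y"
    using v0 unfolding homeomorphism_def by auto
  obtain V where V: "open V" "u ` U = S \<inter> V"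
    using ch unfolding surface_chart_def openin_open by blast
  have "\<forall>\<^sub>F t in nhds 0. \<gamma> t \<in> V"
    using isCont_eventually_in_open[OF \<gamma>(1) V(1)] \<gamma>(2) v0 V(2) by blast
  with \<gamma>(3) have in_chart: "\<forall>\<^sub>F t in nhds 0. \<gamma> t \<in> u ` U"
    by eventually_elim (use V(2) in blast)
  have "((\<lambda>t. g (\<gamma> t)) \<longlongrightarrow> v0) (nhds 0)"
  proof (rule tendstoI)
    fix r :: real assume "r > 0"
    have "\<exists>d>0. \<forall>y\<in>u ` U. dist y (u v0) < d \<longrightarrow> dist (g y) (g (u v0)) < r"
      using g(1) imageI[OF v0, of u] \<open>r > 0\<close> unfolding continuous_on_iff by blast
    then obtain d where d: "d > 0" "\<And>y. y \<in> u ` U \<Longrightarrow> dist y (u v0) < d \<Longrightarrow> dist (g y) v0 < r"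
      using g(2) by auto
    have "\<forall>\<^sub>F t in nhds 0. \<gamma> t \<in> ball (u v0) d"
      using isCont_eventually_in_open[OF \<gamma>(1) open_ball, of "u v0" d] \<gamma>(2) d(1) by simp
    with in_chart show "\<forall>\<^sub>F t in nhds 0. dist (g (\<gamma> t)) v0 < r"
      by eventually_elim (use d(2) in \<open>auto simp: dist_commute\<close>)
  qed
  moreover have "\<forall>\<^sub>F t in nhds 0. u (g (\<gamma> t)) = \<gamma> t"
    using in_chart by eventually_elim (rule g(3))
  ultimately show ?thesis by (rule that[rotated])
qed

lemma surface_chart_tangent_vectors_orthogonal:
  assumes ch: "surface_chart S U u" and v0: "v0 \<in> U"
    and perp: "\<And>h. frechet_derivative u (at v0) h \<bullet> \<zeta> = 0"
    and w: "w \<in> tangent_vectors S (u v0)"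
  shows "\<zeta> \<bullet> w = 0"
proof -
  define L where "L = frechet_derivative u (at v0)"
  have uder: "(u has_derivative L) (at v0)"
    unfolding L_def using surface_chart_has_derivative[OF ch v0] .
  have "inj L" using ch v0 unfolding surface_chart_def L_def by blast
  then obtain m where m: "m > 0" "\<forall>\<^sub>F v in nhds v0. m * norm (v - v0) \<le> norm (u v - u v0)"
    using derivative_injective_imp_bounded_below_near[OF uder] by blast
  obtain \<gamma> e where \<gamma>: "e > 0" "\<gamma> 0 = u v0" "\<And>t. \<bar>t\<bar> < e \<Longrightarrow> \<gamma> t \<in> S"
      "(\<gamma> has_derivative (\<lambda>t. t *\<^sub>R w)) (at 0)"
    using w unfolding tangent_vectors_def has_vector_derivative_def by blast
  have "\<forall>\<^sub>F t in nhds 0. \<gamma> t \<in> S"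
    using \<gamma>(1,3) unfolding eventually_nhds_metric by (auto simp: dist_real_def)
  then obtain c where c: "\<forall>\<^sub>F t in nhds 0. u (c t) = \<gamma> t" "(c \<longlongrightarrow> v0) (nhds 0)"
    using surface_chart_pullback_curve[OF ch v0 has_derivative_continuous[OF \<gamma>(4)] \<gamma>(2)] by blast
  text \<open>The pulled-back curve \<open>c\<close> moves at most linearly in \<open>t\<close> because \<open>L\<close> is injective,
    so the second-order error of \<open>u\<close> along it is \<open>o(t)\<close>, and \<open>\<zeta>\<close> kills the linear part.\<close>
  have "((\<lambda>t. \<zeta> \<bullet> \<gamma> t) has_derivative (\<lambda>t. 0)) (at 0)"
    unfolding has_derivative_at_alt
  proof (intro conjI allI impI)
    fix \<epsilon> :: real assume "\<epsilon> > 0"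
    define K where "K = (norm \<zeta> + 1) * (norm w + 1) / m"
    have K: "K > 0" unfolding K_def using m(1) by (simp add: add_nonneg_pos)
    have cancel: "a * (\<epsilon> / (a * b / m) * (b * \<tau> / m)) = \<epsilon> * \<tau>" if "a > 0" "b > 0" for a b \<tau>
      using that m(1) by (simp add: divide_simps)
    obtain d where d: "d > 0"
      "\<And>v. norm (v - v0) < d \<Longrightarrow> norm (u v - u v0 - L (v - v0)) \<le> \<epsilon> / K * norm (v - v0)"
      using uder divide_pos_pos[OF \<open>\<epsilon> > 0\<close> K] unfolding has_derivative_at_alt by blast
    have "\<forall>\<^sub>F v in nhds v0. norm (u v - u v0 - L (v - v0)) \<le> \<epsilon> / K * norm (v - v0)"
      unfolding eventually_nhds_metric using d by (auto simp: dist_norm)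
    hence "\<forall>\<^sub>F v in nhds v0. norm (u v - u v0 - L (v - v0)) \<le> \<epsilon> / K * norm (v - v0)
        \<and> m * norm (v - v0) \<le> norm (u v - u v0)"
      using m(2) by (rule eventually_conj)
    from filterlim_iff[THEN iffD1, OF c(2), rule_format, OF this]
    have "\<forall>\<^sub>F t in nhds 0. norm (u (c t) - u v0 - L (c t - v0)) \<le> \<epsilon> / K * norm (c t - v0)
        \<and> m * norm (c t - v0) \<le> norm (u (c t) - u v0)" .
    with c(1) has_derivative_at_0_eventually_norm_le[OF \<gamma>(4)]
    have "\<forall>\<^sub>F t in nhds 0. \<bar>\<zeta> \<bullet> \<gamma> t - \<zeta> \<bullet> \<gamma> 0\<bar> \<le> \<epsilon> * \<bar>t\<bar>"
    proof eventually_elim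
      case (elim t)
      have "m * norm (c t - v0) \<le> norm (\<gamma> t - \<gamma> 0)" using elim(1,3) \<gamma>(2) by simp
      also have "\<dots> \<le> (norm w + 1) * \<bar>t\<bar>" by (rule elim(2))
      finally have ct: "norm (c t - v0) \<le> (norm w + 1) * \<bar>t\<bar> / m" using m(1) by (simp add: field_simps)
      have "\<zeta> \<bullet> \<gamma> t - \<zeta> \<bullet> \<gamma> 0 = \<zeta> \<bullet> (u (c t) - u v0 - L (c t - v0))"
        using elim(1) \<gamma>(2) perp[of "c t - v0"] unfolding L_def by (simp add: inner_diff_right inner_commute)
      also have "\<bar>\<dots>\<bar> \<le> norm \<zeta> * norm (u (c t) - u v0 - L (c t - v0))"
        by (rule Cauchy_Schwarz_ineq2)
      also have "\<dots> \<le> (norm \<zeta> + 1) * (\<epsilon> / K * norm (c t - v0))"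
        using elim(3) by (intro mult_mono) auto
      also have "\<dots> \<le> (norm \<zeta> + 1) * (\<epsilon> / K * ((norm w + 1) * \<bar>t\<bar> / m))"
        using ct \<open>\<epsilon> > 0\<close> K by (intro mult_left_mono) auto
      also have "\<dots> = \<epsilon> * \<bar>t\<bar>"
        unfolding K_def by (rule cancel) (simp_all add: add_nonneg_pos)
      finally show ?case .
    qed
    then obtain \<delta> where "\<delta> > 0" "\<And>t. dist t 0 < \<delta> \<Longrightarrow> \<bar>\<zeta> \<bullet> \<gamma> t - \<zeta> \<bullet> \<gamma> 0\<bar> \<le> \<epsilon> * \<bar>t\<bar>"
      unfolding eventually_nhds_metric by blast
    thus "\<exists>d>0. \<forall>t. norm (t - 0) < d \<longrightarrow> norm (\<zeta> \<bullet> \<gamma> t - \<zeta> \<bullet> \<gamma> 0 - 0) \<le> \<epsilon> * norm (t - 0)"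
      by (auto simp: dist_real_def)
  qed simp
  moreover have "((\<lambda>t. \<zeta> \<bullet> \<gamma> t) has_derivative (\<lambda>t. t * (\<zeta> \<bullet> w))) (at 0)"
    using \<gamma>(4) by (auto intro!: derivative_eq_intros)
  ultimately have "(\<lambda>t::real. 0) = (\<lambda>t. t * (\<zeta> \<bullet> w))"
    by (rule has_derivative_unique)
  from fun_cong[OF this, of 1] show ?thesis by simp
qed

lemma sphere_chart_derivative_range:
  assumes ch: "surface_chart (sphere 0 1) W b" and w0: "w0 \<in> W"
  shows "range (frechet_derivative b (at w0)) = {y. b w0 \<bullet> y = 0}"
proof -
  define Db where "Db = frechet_derivative b (at w0)"
  have bder: "(b has_derivative Db) (at w0)"
    unfolding Db_def using surface_chart_has_derivative[OF ch w0] .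
  have sph: "\<And>w. w \<in> W \<Longrightarrow> b w \<bullet> b w = 1"
    using ch unfolding surface_chart_def by (auto simp: dot_square_norm)
  text \<open>Differentiating \<open>b \<bullet> b = 1\<close> shows the range lies in the tangent plane; both are planes.\<close>
  have "((\<lambda>w. b w \<bullet> b w) has_derivative (\<lambda>h. b w0 \<bullet> Db h + Db h \<bullet> b w0)) (at w0)"
    using bder by (auto intro!: derivative_eq_intros)
  moreover have "((\<lambda>w. b w \<bullet> b w) has_derivative (\<lambda>h. 0)) (at w0)"
    using ch w0 sph unfolding surface_chart_def
    by (intro has_derivative_transform_within_open[OF has_derivative_const, of W]) simp_all
  ultimately have "(\<lambda>h. b w0 \<bullet> Db h + Db h \<bullet> b w0) = (\<lambda>h. 0)"
    by (rule has_derivative_unique)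
  hence incl: "range Db \<subseteq> {y. b w0 \<bullet> y = 0}"
    by (auto simp: inner_commute fun_eq_iff)
  have linD: "linear Db" using bder has_derivative_linear by blast
  have injD: "inj Db" using ch w0 unfolding surface_chart_def Db_def by blast
  have "dim (range Db) = dim (UNIV :: (real^2) set)"
    using dim_image_eq[of Db UNIV] linD injD by (auto simp: inj_on_def)
  hence "dim (range Db) = 2" by simp
  moreover have "b w0 \<noteq> 0" using sph[OF w0] by auto
  hence "dim {y. b w0 \<bullet> y = 0} = 2" using dim_hyperplane by fastforce
  ultimately show ?thesis unfolding Db_def[symmetric]
    using subspace_dim_equal[OF linear_subspace_image[OF linD subspace_UNIV] subspace_hyperplane incl]
    by simp
qed

lemma JT_expand:
  "JT f v y = (frechet_derivative f (at v) (axis 1 1) \<bullet> y) *\<^sub>R axis 1 1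
            + (frechet_derivative f (at v) (axis 2 1) \<bullet> y) *\<^sub>R axis 2 1"
  unfolding JT_def by (auto simp: vec_eq_iff forall_2 axis_def)

lemma linear_JT: "linear (JT f v)"
  unfolding JT_expand by (intro linearI) (simp_all add: inner_add_right algebra_simps)

lemma linear_real2_expand:
  fixes h :: "real^2"
  assumes "linear L"
  shows "L h = (h$1) *\<^sub>R L (axis 1 1) + (h$2) *\<^sub>R L (axis 2 1)"
proof -
  have "h = (h$1) *\<^sub>R axis 1 1 + (h$2) *\<^sub>R axis 2 (1::real)"
    by (auto simp: vec_eq_iff forall_2 axis_def)
  hence "L h = L ((h$1) *\<^sub>R axis 1 1 + (h$2) *\<^sub>R axis 2 (1::real))" by simp
  thus ?thesis using assms by (simp add: linear_add linear_scale)
qed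

lemma JT_eq_0_imp_orthogonal:
  assumes "(f has_derivative Df) (at v)" "JT f v y = 0"
  shows "Df h \<bullet> y = 0"
proof -
  have Df: "frechet_derivative f (at v) = Df"
    using assms(1) frechet_derivative_at by metis
  have "Df (axis 1 1) \<bullet> y = 0" "Df (axis 2 1) \<bullet> y = 0"
    using assms(2) unfolding JT_def Df by (auto simp: vec_eq_iff)
  thus ?thesis
    using linear_real2_expand[OF has_derivative_linear[OF assms(1)], of h]
    by (simp add: inner_add_left)
qed

type_synonym CI_parameter = "(real^2) \<times> (real^2) \<times> real \<times> (real^3)"
type_synonym CI_element =
  "(((real^2) \<times> (real^2) \<times> real) \<times> ((real^2) \<times> (real^2) \<times> real)) \<times> ((real^3) \<times> (real^3))"

definition chord :: "(real^2 \<Rightarrow> real^3) \<Rightarrow> CI_parameter \<Rightarrow> real^3" where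
  "chord u q = snd (snd (snd q)) - u (fst q)"

definition cos_angle :: "(real^2 \<Rightarrow> real^3) \<Rightarrow> (real^2 \<Rightarrow> real^3) \<Rightarrow> CI_parameter \<Rightarrow> real" where
  "cos_angle u b q = (chord u q \<bullet> b (fst (snd q))) / norm (chord u q)"

definition covector :: "(real^2 \<Rightarrow> real^3) \<Rightarrow> (real^2 \<Rightarrow> real^3) \<Rightarrow> CI_parameter \<Rightarrow> real^3" where
  "covector u b q = - fst (snd (snd q)) *\<^sub>R
     (b (fst (snd q)) - (cos_angle u b q / norm (chord u q)) *\<^sub>R chord u q)"

definition CI_chart :: "(real^2 \<Rightarrow> real^3) \<Rightarrow> (real^2 \<Rightarrow> real^3) \<Rightarrow> CI_parameter \<Rightarrow> CI_element"
  where
  "CI_chart u b q =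
    (((fst q, fst (snd q), arccos (cos_angle u b q)),
      (JT u (fst q) (covector u b q), fst (snd (snd q)) *\<^sub>R JT b (fst (snd q)) (chord u q),
       fst (snd (snd q)) * norm (chord u q) * sin (arccos (cos_angle u b q)))),
     (snd (snd (snd q)), covector u b q))"

definition CI_unchart :: "(real^2 \<Rightarrow> real^3) \<Rightarrow> CI_element \<Rightarrow> CI_parameter" where
  "CI_unchart u P = (fst (fst (fst P)), fst (snd (fst (fst P))),
     snd (snd (snd (fst P))) / (norm (fst (snd P) - u (fst (fst (fst P)))) * sin (snd (snd (fst (fst P))))),
     fst (snd P))"

lemma CI_chart_differentiable:
  assumes u: "(u has_derivative Du) (at (fst p))"
    and b: "(b has_derivative Db) (at (fst (snd p)))"
    and u1: "\<And>i. ((\<lambda>v. frechet_derivative u (at v) (axis i 1)) has_derivative Du2 i) (at (fst p))"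
    and b1: "\<And>i. ((\<lambda>w. frechet_derivative b (at w) (axis i 1)) has_derivative Db2 i) (at (fst (snd p)))"
    and nonzero: "chord u p \<noteq> 0" and cos: "-1 < cos_angle u b p" "cos_angle u b p < 1"
  shows "CI_chart u b differentiable (at p)"
proof -
  note [derivative_intros] = has_derivative_compose_fst[OF u] has_derivative_compose_fst_snd[OF b]
    has_derivative_compose_fst[OF u1] has_derivative_compose_fst_snd[OF b1]
  have [derivative_intros]: "(chord u has_derivative (\<lambda>h. snd (snd (snd h)) - Du (fst h))) (at p)"
    unfolding chord_def by (auto intro!: derivative_eq_intros)
  have "\<exists>D. (cos_angle u b has_derivative D) (at p)"
    unfolding cos_angle_def using nonzero by (intro exI) (auto intro!: derivative_intros)
  then obtain Dc where [derivative_intros]: "(cos_angle u b has_derivative Dc) (at p)" by blast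
  have "\<exists>D. (covector u b has_derivative D) (at p)"
    unfolding covector_def using nonzero by (intro exI) (rule derivative_intros | simp)+
  then obtain D\<zeta> where [derivative_intros]: "(covector u b has_derivative D\<zeta>) (at p)" by blast
  show ?thesis
    unfolding differentiable_def CI_chart_def JT_expand using cos nonzero
    by (intro exI) (rule derivative_intros | simp)+
qed

locale CI_point =
  fixes M S :: "(real^3) set" and \<epsilon> :: real and U W :: "(real^2) set" and u b :: "real^2 \<Rightarrow> real^3"
    and v0 w0 :: "real^2" and \<phi>0 lam0 :: real and z0 :: "real^3"
  assumes open_M: "open M" and chart_u: "surface_chart S U u"
    and chart_b: "surface_chart (sphere 0 1) W b"
    and tuy: "tuy_condition S M" and M_S_disjoint: "\<And>z x. z \<in> M \<Longrightarrow> x \<in> S \<Longrightarrow> z \<noteq> x"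
    and v0: "v0 \<in> U" and w0: "w0 \<in> W" and \<phi>0: "\<phi>0 \<in> {\<epsilon><..<pi/2-\<epsilon>}" and z0: "z0 \<in> M"
    and phase0: "phase (u v0) (b w0) \<phi>0 z0 = 0" and lam0: "lam0 \<noteq> 0" and \<epsilon>: "0 \<le> \<epsilon>"
begin

definition p0 :: CI_parameter where
  "p0 = (v0, w0, lam0, z0)"

definition C :: "CI_element set" where
  "C = CI_coords M \<epsilon> U u W b"

definition Du :: "real^2 \<Rightarrow> real^3" where
  "Du = frechet_derivative u (at v0)"

definition Db :: "real^2 \<Rightarrow> real^3" where
  "Db = frechet_derivative b (at w0)"

definition r0 :: "real^3" where
  "r0 = z0 - u v0"

definition \<rho> :: real where
  "\<rho> = norm r0"

definition \<beta> :: "real^3" where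
  "\<beta> = b w0"

definition c :: real where
  "c = cos \<phi>0"

definition s :: real where
  "s = sin \<phi>0"

definition \<kappa>0 :: real where
  "\<kappa>0 = c / \<rho>"

definition \<zeta>0 :: "real^3" where
  "\<zeta>0 = - lam0 *\<^sub>R (\<beta> - \<kappa>0 *\<^sub>R r0)"

lemma open_U: "open U"
  using chart_u unfolding surface_chart_def by blast

lemma open_W: "open W"
  using chart_b unfolding surface_chart_def by blast

lemma u_in_S: "v \<in> U \<Longrightarrow> u v \<in> S"
  using chart_u unfolding surface_chart_def by blast

lemma norm_b: "w \<in> W \<Longrightarrow> norm (b w) = 1"
  using chart_b unfolding surface_chart_def by auto

lemma \<beta>_inner_self: "\<beta> \<bullet> \<beta> = 1"
  using norm_b[OF w0] unfolding \<beta>_def by (simp add: dot_square_norm)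

lemma r0_nonzero: "r0 \<noteq> 0"
  unfolding r0_def using M_S_disjoint[OF z0 u_in_S[OF v0]] by simp

lemma \<rho>_pos: "\<rho> > 0"
  unfolding \<rho>_def using r0_nonzero by simp

lemma r0_inner_self: "r0 \<bullet> r0 = \<rho>\<^sup>2"
  unfolding \<rho>_def by (simp add: dot_square_norm)

lemma \<phi>0_bounds: "0 < \<phi>0" "\<phi>0 < pi/2"
  using \<phi>0 \<epsilon> by auto

lemma c_bounds: "0 < c" "c < 1"
proof -
  show "0 < c" unfolding c_def using \<phi>0_bounds by (intro cos_gt_zero_pi) auto
  have "cos \<phi>0 < cos 0" using \<phi>0_bounds pi_gt3 by (intro cos_monotone_0_pi) auto
  thus "c < 1" unfolding c_def by simp
qed

lemma c_square_less_1: "c\<^sup>2 < 1"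
proof -
  have "c * c < 1 * 1" using c_bounds by (intro mult_strict_mono) auto
  thus ?thesis by (simp add: power2_eq_square)
qed

lemma s_pos: "0 < s"
  unfolding s_def using \<phi>0_bounds by (auto intro!: sin_gt_zero)

lemma s_eq_sqrt: "s = sqrt (1 - c\<^sup>2)"
  using s_pos unfolding s_def c_def by (metis less_eq_real_def real_sqrt_abs sin_squared_eq abs_of_pos)

lemma r0_inner_\<beta>: "r0 \<bullet> \<beta> = \<rho> * c"
  using phase0 unfolding phase_def r0_def \<rho>_def \<beta>_def c_def by simp

lemma chord_p0: "chord u (v0, w0, lam0, z0) = r0"
  unfolding chord_def r0_def by simp

lemma cos_angle_p0: "cos_angle u b (v0, w0, lam0, z0) = c"
  unfolding cos_angle_def chord_p0 using r0_inner_\<beta> \<rho>_pos by (simp add: \<beta>_def \<rho>_def[symmetric])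

lemma arccos_c: "arccos c = \<phi>0"
  unfolding c_def using \<phi>0_bounds by (intro arccos_cos) auto

lemma CI_chart_p0:
  "CI_chart u b p0 = (((v0, w0, \<phi>0), (JT u v0 \<zeta>0, lam0 *\<^sub>R JT b w0 r0, lam0 * \<rho> * s)), (z0, \<zeta>0))"
  unfolding CI_chart_def
  by (simp add: p0_def covector_def cos_angle_p0 chord_p0 arccos_c \<zeta>0_def \<kappa>0_def \<rho>_def \<beta>_def s_def)

lemma cos_angle_bounds:
  assumes "fst (snd q) \<in> W"
  shows "-1 \<le> cos_angle u b q \<and> cos_angle u b q \<le> 1"
proof (cases "chord u q = 0")
  case False
  have "\<bar>chord u q \<bullet> b (fst (snd q))\<bar> \<le> norm (chord u q)"
    using Cauchy_Schwarz_ineq2[of "chord u q" "b (fst (snd q))"] norm_b[OF assms] by simp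
  thus ?thesis using False unfolding cos_angle_def by (auto simp: abs_le_iff field_simps)
qed (simp add: cos_angle_def)

lemma CI_chart_in_C:
  assumes "fst q \<in> U" "fst (snd q) \<in> W" "fst (snd (snd q)) \<noteq> 0" "snd (snd (snd q)) \<in> M"
    and "arccos (cos_angle u b q) \<in> {\<epsilon><..<pi/2-\<epsilon>}"
  shows "CI_chart u b q \<in> C"
proof -
  obtain v w l z where q: "q = (v, w, l, z)" by (cases q) auto
  have "z - u v \<noteq> 0" using M_S_disjoint[of z "u v"] u_in_S assms by (simp add: q)
  moreover have cos: "cos (arccos (cos_angle u b q)) = cos_angle u b q"
    using cos_angle_bounds[OF assms(2)] by simp
  ultimately have "phase (u v) (b w) (arccos (cos_angle u b q)) z = 0"
    unfolding phase_def by (simp add: cos_angle_def chord_def q)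
  moreover have "covector u b q =
      - l *\<^sub>R (b w - (cos (arccos (cos_angle u b q)) / norm (z - u v)) *\<^sub>R (z - u v))"
    unfolding cos by (simp add: covector_def q chord_def)
  ultimately show ?thesis
    unfolding C_def CI_coords_def CI_chart_def mem_Collect_eq
    using assms by (simp add: q chord_def) blast
qed

lemma CI_chart_unchart: "P \<in> C \<Longrightarrow> CI_chart u b (CI_unchart u P) = P"
proof -
  assume "P \<in> C"
  then obtain v w \<phi> uh bh \<phi>h z \<zeta> l where P: "P = (((v, w, \<phi>), (uh, bh, \<phi>h)), (z, \<zeta>))"
    and mem: "v \<in> U" "w \<in> W" "\<phi> \<in> {\<epsilon> <..< pi/2 - \<epsilon>}" "z \<in> M"
       "phase (u v) (b w) \<phi> z = 0" "l \<noteq> 0"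
       "\<zeta> = - l *\<^sub>R (b w - (cos \<phi> / norm (z - u v)) *\<^sub>R (z - u v))"
       "uh = JT u v \<zeta>" "bh = l *\<^sub>R JT b w (z - u v)" "\<phi>h = l * norm (z - u v) * sin \<phi>"
    unfolding C_def CI_coords_def by blast
  have "norm (z - u v) \<noteq> 0" using M_S_disjoint[OF mem(4) u_in_S[OF mem(1)]] by simp
  moreover have "sin \<phi> > 0" using mem(3) \<epsilon> by (intro sin_gt_zero) auto
  ultimately have l: "\<phi>h / (norm (z - u v) * sin \<phi>) = l" using mem(10) by (simp add: field_simps)
  have cos: "cos_angle u b (v, w, l, z) = cos \<phi>"
    using mem(5) \<open>norm (z - u v) \<noteq> 0\<close> unfolding cos_angle_def chord_def phase_def
    by (simp add: field_simps)
  have "arccos (cos \<phi>) = \<phi>" using mem(3) \<epsilon> by (intro arccos_cos) auto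
  thus ?thesis unfolding P CI_unchart_def CI_chart_def using mem l
    by (simp add: cos covector_def chord_def)
qed

lemma CI_unchart_p0: "CI_unchart u (CI_chart u b p0) = p0"
  unfolding CI_chart_p0 CI_unchart_def using \<rho>_pos s_pos lam0
  by (simp add: p0_def r0_def[symmetric] \<rho>_def[symmetric] s_def[symmetric])

lemma Du_derivative: "(u has_derivative Du) (at v0)"
  unfolding Du_def using surface_chart_has_derivative[OF chart_u v0] .

lemma Db_derivative: "(b has_derivative Db) (at w0)"
  unfolding Db_def using surface_chart_has_derivative[OF chart_b w0] .

lemma linear_Du: "linear Du"
  using Du_derivative has_derivative_linear by blast

lemma linear_Db: "linear Db"
  using Db_derivative has_derivative_linear by blast

lemma CI_unchart_differentiable: "CI_unchart u differentiable (at (CI_chart u b p0))"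
proof -
  have u: "((\<lambda>y. u (g y)) has_derivative (\<lambda>h. Du (g' h))) (at x)"
    if "(g has_derivative g') (at x)" "g x = v0" for g g' and x :: CI_element
    using has_derivative_compose[OF that(1)] Du_derivative that(2) by (simp add: o_def)
  have "r0 \<noteq> 0" "\<rho> * s \<noteq> 0" using r0_nonzero \<rho>_pos s_pos by auto
  thus ?thesis unfolding CI_unchart_def[abs_def] differentiable_def CI_chart_p0
    by (intro exI) (rule derivative_intros u | simp add: r0_def \<rho>_def s_def)+
qed

definition F' :: "CI_parameter \<Rightarrow> CI_element" where
  "F' = frechet_derivative (CI_chart u b) (at p0)"

lemma F'_derivative: "(CI_chart u b has_derivative F') (at p0)"
proof -
  have "CI_chart u b differentiable (at p0)"
    using Du_derivative Db_derivative chord_p0 r0_nonzero cos_angle_p0 c_bounds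
      surface_chart_partial_has_derivative[OF chart_u v0] surface_chart_partial_has_derivative[OF chart_b w0]
    by (intro CI_chart_differentiable) (auto simp: p0_def)
  thus ?thesis unfolding F'_def using frechet_derivative_works by blast
qed

lemma linear_F': "linear F'"
  using F'_derivative has_derivative_linear by blast

lemma eventually_CI_chart_in_C: "\<forall>\<^sub>F q in nhds p0. CI_chart u b q \<in> C"
proof -
  have "isCont (CI_chart u b) p0" using F'_derivative has_derivative_continuous by blast
  hence "isCont (\<lambda>q. snd (snd (fst (fst (CI_chart u b q))))) p0" by (intro isCont_fst isCont_snd)
  hence "isCont (\<lambda>q. arccos (cos_angle u b q)) p0" by (simp add: CI_chart_def)
  moreover have "arccos (cos_angle u b p0) \<in> {\<epsilon><..<pi/2-\<epsilon>}"
    using \<phi>0 by (simp add: p0_def cos_angle_p0 arccos_c)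
  ultimately have "\<forall>\<^sub>F q in nhds p0. arccos (cos_angle u b q) \<in> {\<epsilon><..<pi/2-\<epsilon>}"
    by (intro isCont_eventually_in_open) auto
  moreover have "\<forall>\<^sub>F q in nhds p0. fst q \<in> U" "\<forall>\<^sub>F q in nhds p0. fst (snd q) \<in> W"
    using v0 w0 open_U open_W by (intro isCont_eventually_in_open; auto intro!: continuous_intros simp: p0_def)+
  moreover have "\<forall>\<^sub>F q in nhds p0. fst (snd (snd q)) \<in> - {0}" "\<forall>\<^sub>F q in nhds p0. snd (snd (snd q)) \<in> M"
    using lam0 z0 open_M by (intro isCont_eventually_in_open; auto intro!: continuous_intros simp: p0_def)+
  ultimately show ?thesis by eventually_elim (auto intro: CI_chart_in_C)
qed

lemma tangent_space_eq_range_F': "tangent_vectors C (CI_chart u b p0) = range F'"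
proof
  show "range F' \<subseteq> tangent_vectors C (CI_chart u b p0)"
    using range_derivative_subset_tangent_vectors[OF F'_derivative eventually_CI_chart_in_C] .
  obtain D where "(CI_unchart u has_derivative D) (at (CI_chart u b p0))"
    using CI_unchart_differentiable unfolding differentiable_def by blast
  thus "tangent_vectors C (CI_chart u b p0) \<subseteq> range F'"
    using tangent_vectors_subset_range_derivative[OF F'_derivative _ CI_unchart_p0 CI_chart_unchart]
    by blast
qed

definition Dchord :: "CI_parameter \<Rightarrow> real^3" where
  "Dchord h = snd (snd (snd h)) - Du (fst h)"

definition Dnorm :: "CI_parameter \<Rightarrow> real" where
  "Dnorm h = (r0 \<bullet> Dchord h) / \<rho>"

definition Dcos :: "CI_parameter \<Rightarrow> real" where
  "Dcos h = (Dchord h \<bullet> \<beta> + r0 \<bullet> Db (fst (snd h)) - c * Dnorm h) / \<rho>"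

definition D\<kappa> :: "CI_parameter \<Rightarrow> real" where
  "D\<kappa> h = (Dcos h - \<kappa>0 * Dnorm h) / \<rho>"

definition D\<zeta> :: "CI_parameter \<Rightarrow> real^3" where
  "D\<zeta> h = - fst (snd (snd h)) *\<^sub>R (\<beta> - \<kappa>0 *\<^sub>R r0)
     - lam0 *\<^sub>R (Db (fst (snd h)) - (D\<kappa> h *\<^sub>R r0 + \<kappa>0 *\<^sub>R Dchord h))"

definition D\<phi> :: "CI_parameter \<Rightarrow> real" where
  "D\<phi> h = - Dcos h / s"

definition D\<phi>hat :: "CI_parameter \<Rightarrow> real" where
  "D\<phi>hat h = fst (snd (snd h)) * \<rho> * s + lam0 * Dnorm h * s + lam0 * \<rho> * (c * D\<phi> h)"

lemma u_fst_derivative: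
  "((\<lambda>q. u (fst q)) has_derivative (\<lambda>h. Du (fst h))) (at p0 within X)"
  using Du_derivative by (intro has_derivative_compose_fst) (simp add: p0_def)

lemma b_fst_snd_derivative:
  "((\<lambda>q. b (fst (snd q))) has_derivative (\<lambda>h. Db (fst (snd h)))) (at p0 within X)"
  using Db_derivative by (intro has_derivative_compose_fst_snd) (simp add: p0_def)

lemma chord_derivative: "(chord u has_derivative Dchord) (at p0)"
  unfolding chord_def[abs_def] Dchord_def[abs_def] by (auto intro!: derivative_eq_intros u_fst_derivative)

lemma norm_chord_derivative: "((\<lambda>q. norm (chord u q)) has_derivative Dnorm) (at p0)"
  using has_derivative_norm_compose[OF chord_derivative] r0_nonzero
  by (simp add: chord_p0 p0_def Dnorm_def[abs_def] sgn_div_norm \<rho>_def[symmetric] inner_commute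
      divide_inverse mult.commute)

lemma cos_angle_derivative: "(cos_angle u b has_derivative Dcos) (at p0)"
  unfolding cos_angle_def[abs_def]
proof ((rule derivative_eq_intros chord_derivative norm_chord_derivative b_fst_snd_derivative
      | simp add: chord_p0 p0_def r0_nonzero)+, rule ext)
qed (use \<rho>_pos in \<open>simp add: Dcos_def chord_p0 \<rho>_def[symmetric] \<beta>_def[symmetric] p0_def
       r0_inner_\<beta> sgn_div_norm Dnorm_def inner_commute\<close>,
     use r0_inner_\<beta> in \<open>simp add: field_simps inner_commute\<close>)

lemma covector_derivative: "(covector u b has_derivative D\<zeta>) (at p0)"
  unfolding covector_def[abs_def]
proof ((rule derivative_eq_intros chord_derivative norm_chord_derivative b_fst_snd_derivative
      cos_angle_derivative | simp add: chord_p0 p0_def r0_nonzero)+, rule ext)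
qed (use \<rho>_pos in \<open>simp add: D\<zeta>_def D\<kappa>_def chord_p0 cos_angle_p0 \<rho>_def[symmetric]
       \<beta>_def[symmetric] p0_def \<kappa>0_def sgn_div_norm Dnorm_def inner_commute\<close>,
     simp add: field_simps)

lemma angle_derivative: "((\<lambda>q. arccos (cos_angle u b q)) has_derivative D\<phi>) (at p0)"
proof (rule derivative_eq_intros)
  show "- 1 < cos_angle u b p0" "cos_angle u b p0 < 1"
    using c_bounds by (simp_all add: cos_angle_p0 p0_def)
qed (rule cos_angle_derivative, simp add: fun_eq_iff D\<phi>_def cos_angle_p0 p0_def s_eq_sqrt[symmetric] divide_inverse)

lemma F'_component:
  assumes "bounded_linear g" "((\<lambda>q. g (CI_chart u b q)) has_derivative G) (at p0)"
  shows "g (F' h) = G h"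
  using has_derivative_component_unique[OF F'_derivative assms] .

lemma F'_base: "fst (fst (F' h)) = (fst h, fst (snd h), D\<phi> h)"
  by (rule F'_component) (auto simp: CI_chart_def intro!: bounded_linear_intros derivative_intros angle_derivative)

lemma F'_z: "fst (snd (F' h)) = snd (snd (snd h))"
  by (rule F'_component) (auto intro!: bounded_linear_intros derivative_eq_intros simp: CI_chart_def)

lemma F'_\<zeta>: "snd (snd (F' h)) = D\<zeta> h"
  by (rule F'_component) (auto intro!: bounded_linear_intros covector_derivative simp: CI_chart_def)

lemma F'_\<phi>hat: "snd (snd (snd (fst (F' h)))) = D\<phi>hat h"
proof (rule F'_component)
  have "((\<lambda>q. fst (snd (snd q)) * norm (chord u q)) has_derivative
      (\<lambda>h. lam0 * Dnorm h + fst (snd (snd h)) * \<rho>)) (at p0)"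
    using has_derivative_mult[OF has_derivative_fst[OF has_derivative_snd[OF has_derivative_snd[OF
        has_derivative_ident]]] norm_chord_derivative]
    by (simp add: p0_def chord_p0 \<rho>_def)
  moreover have "((\<lambda>q. sin (arccos (cos_angle u b q))) has_derivative (\<lambda>h. c * D\<phi> h)) (at p0)"
    using has_derivative_sin[OF angle_derivative]
    by (simp add: mult.commute cos_angle_p0 p0_def arccos_c c_def)
  ultimately show "((\<lambda>q. snd (snd (snd (fst (CI_chart u b q))))) has_derivative D\<phi>hat) (at p0)"
    unfolding CI_chart_def snd_conv fst_conv
    by (rule has_derivative_eq_rhs[OF has_derivative_mult])
       (auto simp: D\<phi>hat_def cos_angle_p0 chord_p0 arccos_c p0_def s_def \<rho>_def[symmetric]
          algebra_simps fun_eq_iff)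
qed (intro bounded_linear_intros)

lemma F'_uhat:
  assumes "fst h = 0"
  shows "fst (snd (fst (F' h))) = JT u v0 (D\<zeta> h)"
proof -
  define D2 where "D2 i = frechet_derivative (\<lambda>v. frechet_derivative u (at v) (axis i 1)) (at v0)" for i
  have [derivative_intros]: "((\<lambda>q. frechet_derivative u (at (fst q)) (axis i 1)) has_derivative
      (\<lambda>h. D2 i (fst h))) (at p0)" for i
    unfolding D2_def using surface_chart_partial_has_derivative[OF chart_u v0]
    by (intro has_derivative_compose_fst) (simp add: p0_def)
  have "linear (D2 i)" for i
    using surface_chart_partial_has_derivative[OF chart_u v0] has_derivative_linear unfolding D2_def by blast
  hence D2_0: "D2 i (fst h) = 0" for i using assms linear_0 by metis
  have der: "((\<lambda>q. fst (snd (fst (CI_chart u b q)))) has_derivative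
     (\<lambda>h. (D2 1 (fst h) \<bullet> covector u b p0 + frechet_derivative u (at v0) (axis 1 1) \<bullet> D\<zeta> h) *\<^sub>R axis 1 1
         + (D2 2 (fst h) \<bullet> covector u b p0 + frechet_derivative u (at v0) (axis 2 1) \<bullet> D\<zeta> h) *\<^sub>R axis 2 1))
     (at p0)"
    unfolding CI_chart_def fst_conv snd_conv JT_expand
    by (rule derivative_eq_intros covector_derivative refl | simp add: p0_def)+
       (simp add: fun_eq_iff add.commute)
  have "bounded_linear (\<lambda>P. fst (snd (fst P)))" by (intro bounded_linear_intros)
  from F'_component[OF this der] show ?thesis using D2_0 by (simp add: JT_expand)
qed

lemma F'_\<beta>hat:
  assumes "fst (snd h) = 0"
  shows "fst (snd (snd (fst (F' h)))) = fst (snd (snd h)) *\<^sub>R JT b w0 r0 + lam0 *\<^sub>R JT b w0 (Dchord h)"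
proof -
  define D2 where "D2 i = frechet_derivative (\<lambda>w. frechet_derivative b (at w) (axis i 1)) (at w0)" for i
  have [derivative_intros]: "((\<lambda>q. frechet_derivative b (at (fst (snd q))) (axis i 1)) has_derivative
      (\<lambda>h. D2 i (fst (snd h)))) (at p0)" for i
    unfolding D2_def using surface_chart_partial_has_derivative[OF chart_b w0]
    by (intro has_derivative_compose_fst_snd) (simp add: p0_def)
  have "linear (D2 i)" for i
    using surface_chart_partial_has_derivative[OF chart_b w0] has_derivative_linear unfolding D2_def by blast
  hence D2_0: "D2 i (fst (snd h)) = 0" for i using assms linear_0 by metis
  have der: "((\<lambda>q. fst (snd (snd (fst (CI_chart u b q))))) has_derivative
     (\<lambda>h. fst (snd (snd h)) *\<^sub>R JT b w0 r0 + lam0 *\<^sub>R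
       ((D2 1 (fst (snd h)) \<bullet> r0 + frechet_derivative b (at w0) (axis 1 1) \<bullet> Dchord h) *\<^sub>R axis 1 1
      + (D2 2 (fst (snd h)) \<bullet> r0 + frechet_derivative b (at w0) (axis 2 1) \<bullet> Dchord h) *\<^sub>R axis 2 1)))
     (at p0)"
    unfolding CI_chart_def fst_conv snd_conv JT_expand[of b]
    by (rule derivative_eq_intros chord_derivative refl | simp add: p0_def)+
       (simp add: chord_p0 JT_expand fun_eq_iff algebra_simps)
  have "bounded_linear (\<lambda>P. fst (snd (snd (fst P))))" by (intro bounded_linear_intros)
  from F'_component[OF this der] show ?thesis using D2_0 by (simp add: JT_expand)
qed

lemma Db_range: "range Db = {y. \<beta> \<bullet> y = 0}"
  unfolding Db_def \<beta>_def using sphere_chart_derivative_range[OF chart_b w0] .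

lemma JT_b_eq_0_imp_eq_0:
  assumes "JT b w0 y = 0" "\<beta> \<bullet> y = 0"
  shows "y = 0"
proof -
  obtain k where "y = Db k" using assms(2) Db_range by blast
  thus ?thesis using JT_eq_0_imp_orthogonal[OF Db_derivative assms(1), of k] by simp
qed

definition \<beta>_perp :: "real^3" where
  "\<beta>_perp = \<beta> - \<kappa>0 *\<^sub>R r0"

lemma \<zeta>0_eq: "\<zeta>0 = - lam0 *\<^sub>R \<beta>_perp"
  unfolding \<zeta>0_def \<beta>_perp_def by simp

lemma r0_inner_\<beta>_perp: "r0 \<bullet> \<beta>_perp = 0"
  unfolding \<beta>_perp_def \<kappa>0_def using r0_inner_\<beta> r0_inner_self \<rho>_pos
  by (simp add: inner_diff_right power2_eq_square)

lemma \<beta>_inner_\<beta>_perp: "\<beta> \<bullet> \<beta>_perp = 1 - c\<^sup>2"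
  unfolding \<beta>_perp_def \<kappa>0_def using r0_inner_\<beta> \<rho>_pos \<beta>_inner_self
  by (simp add: inner_diff_right inner_commute power2_eq_square)

lemma \<beta>_perp_nonzero: "\<beta>_perp \<noteq> 0"
  using \<beta>_inner_\<beta>_perp c_square_less_1 by auto

lemma JT_u_\<zeta>0_nonzero: "JT u v0 \<zeta>0 \<noteq> 0"
proof
  assume "JT u v0 \<zeta>0 = 0"
  hence perp: "frechet_derivative u (at v0) h \<bullet> \<zeta>0 = 0" for h
    using JT_eq_0_imp_orthogonal[OF Du_derivative] by (simp add: Du_def)
  have "\<zeta>0 \<noteq> 0" using \<zeta>0_eq \<beta>_perp_nonzero lam0 by simp
  hence "accessible S z0 \<zeta>0" using tuy z0 unfolding tuy_condition_def by blast
  moreover have "u v0 \<in> hyperplane_H z0 \<zeta>0 \<inter> S"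
    using u_in_S[OF v0] r0_inner_\<beta>_perp unfolding hyperplane_H_def \<zeta>0_eq r0_def
    by (simp add: inner_diff_left inner_commute)
  ultimately obtain t where "t \<in> tangent_vectors S (u v0)" "\<zeta>0 \<bullet> t \<noteq> 0"
    unfolding accessible_def by blast
  thus False using surface_chart_tangent_vectors_orthogonal[OF chart_u v0 perp] by blast
qed

lemma fst_F'_eq_0_imp_eq_0:
  assumes "fst (F' h) = 0"
  shows "h = 0"
proof -
  obtain dv dw dl dz where h: "h = (dv, dw, dl, dz)" by (cases h) auto
  have F'0: "fst (fst (F' h)) = 0" "fst (snd (fst (F' h))) = 0" "fst (snd (snd (fst (F' h)))) = 0"
    "snd (snd (snd (fst (F' h)))) = 0"
    using assms by (simp_all add: prod_eq_iff)
  have base: "fst h = 0 \<and> fst (snd h) = 0 \<and> D\<phi> h = 0"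
    using F'0(1) F'_base[of h] by (simp add: zero_prod_def)
  hence dv: "dv = 0" and dw: "dw = 0" by (simp_all add: h)
  have \<phi>: "D\<phi> h = 0" using base by blast
  have uhat: "JT u v0 (D\<zeta> h) = 0" using F'0(2) F'_uhat[of h] by (simp add: h dv)
  have \<beta>hat: "dl *\<^sub>R JT b w0 r0 + lam0 *\<^sub>R JT b w0 (Dchord h) = 0"
    using F'0(3) F'_\<beta>hat[of h] by (simp add: h dw)
  have \<phi>hat: "D\<phi>hat h = 0" using F'0(4) F'_\<phi>hat[of h] by simp
  have Dchord: "Dchord h = dz" unfolding Dchord_def h dv by (simp add: linear_0[OF linear_Du])
  have cos: "Dcos h = 0" using \<phi> s_pos unfolding D\<phi>_def by simp
  hence "Dchord h \<bullet> \<beta> + r0 \<bullet> Db (fst (snd h)) - c * Dnorm h = 0" unfolding Dcos_def using \<rho>_pos by simp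
  hence dz_\<beta>: "dz \<bullet> \<beta> = c * Dnorm h" unfolding Dchord by (simp add: h dw linear_0[OF linear_Db])
  have "s * (dl * \<rho> + lam0 * Dnorm h) = 0"
    using \<phi>hat \<phi> unfolding D\<phi>hat_def h by (simp add: algebra_simps)
  hence dl_Dnorm: "dl * \<rho> + lam0 * Dnorm h = 0" using s_pos by simp
  text \<open>\<open>\<beta>hat = 0\<close> and \<open>\<phi> = \<phi>hat = 0\<close> force \<open>y = 0\<close>, i.e. \<open>dz\<close> is radial; then \<open>D\<zeta> h\<close> is a
    multiple of \<open>\<zeta>0\<close> and \<open>uhat = 0\<close> forces \<open>dl = 0\<close>.\<close>
  define y where "y = dl *\<^sub>R r0 + lam0 *\<^sub>R dz"
  have JT_y: "JT b w0 y = 0"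
    unfolding y_def using \<beta>hat Dchord linear_JT by (simp add: linear_add linear_scale)
  have "\<beta> \<bullet> y = c * (dl * \<rho> + lam0 * Dnorm h)"
    unfolding y_def using r0_inner_\<beta> dz_\<beta> by (simp add: inner_add_right inner_commute algebra_simps)
  hence "y = 0" using JT_b_eq_0_imp_eq_0[OF JT_y] dl_Dnorm by simp
  hence "lam0 *\<^sub>R dz = - (dl *\<^sub>R r0)" unfolding y_def by (simp add: add_eq_0_iff2 add.commute)
  hence "(1 / lam0) *\<^sub>R (lam0 *\<^sub>R dz) = (- dl / lam0) *\<^sub>R r0" by simp
  hence dz: "dz = (- dl / lam0) *\<^sub>R r0" using lam0 by simp
  have Dnorm: "Dnorm h = (- dl / lam0) * \<rho>"
    unfolding Dnorm_def Dchord dz using \<rho>_pos r0_inner_self by (simp add: power2_eq_square)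
  have D\<kappa>: "D\<kappa> h = \<kappa>0 * dl / lam0"
    unfolding D\<kappa>_def cos Dnorm using \<rho>_pos lam0 by (simp add: field_simps)
  have "D\<zeta> h = - dl *\<^sub>R \<beta>_perp + (lam0 * D\<kappa> h) *\<^sub>R r0 + (lam0 * \<kappa>0) *\<^sub>R dz"
    unfolding D\<zeta>_def \<beta>_perp_def Dchord by (simp add: h dw linear_0[OF linear_Db] algebra_simps)
  also have "\<dots> = (dl / lam0) *\<^sub>R \<zeta>0"
    unfolding D\<kappa> dz \<zeta>0_eq using lam0 by (simp add: field_simps)
  finally have "(dl / lam0) *\<^sub>R JT u v0 \<zeta>0 = 0"
    using uhat linear_JT by (simp add: linear_scale)
  hence "dl = 0" using JT_u_\<zeta>0_nonzero lam0 by simp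
  thus ?thesis using h dv dw dz by (simp add: zero_prod_def)
qed

lemma linear_fst_F': "linear (\<lambda>h. fst (F' h))"
  using linear_compose[OF linear_F' linear_fst] unfolding o_def .

lemma inj_fst_F': "inj (\<lambda>h. fst (F' h))"
  unfolding linear_injective_0[OF linear_fst_F'] using fst_F'_eq_0_imp_eq_0 by blast

lemma linear_D\<phi>: "linear D\<phi>"
  by (rule has_derivative_linear[OF angle_derivative])

lemma D\<phi>_z_direction_nonzero: "D\<phi> (0, 0, 0, \<beta>_perp) \<noteq> 0"
proof -
  have Dnorm: "Dnorm (0, 0, 0, \<beta>_perp) = 0"
    by (simp add: Dnorm_def Dchord_def r0_inner_\<beta>_perp linear_0[OF linear_Du])
  have "Dcos (0, 0, 0, \<beta>_perp) = (\<beta> \<bullet> \<beta>_perp) / \<rho>"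
    unfolding Dcos_def Dnorm by (simp add: Dchord_def linear_0[OF linear_Du] linear_0[OF linear_Db] inner_commute)
  hence "Dcos (0, 0, 0, \<beta>_perp) = (1 - c\<^sup>2) / \<rho>" unfolding \<beta>_inner_\<beta>_perp .
  hence "Dcos (0, 0, 0, \<beta>_perp) \<noteq> 0"
    using divide_pos_pos[of "1 - c\<^sup>2" \<rho>] \<rho>_pos c_square_less_1 by simp
  thus ?thesis using s_pos by (simp add: D\<phi>_def)
qed

lemma D\<zeta>_lam_direction: "D\<zeta> (0, 0, 1, 0) = - \<beta>_perp"
  by (simp add: D\<zeta>_def D\<kappa>_def Dcos_def Dnorm_def Dchord_def \<beta>_perp_def
      linear_0[OF linear_Du] linear_0[OF linear_Db])

lemma D\<zeta>_w_direction: "- lam0 *\<^sub>R cross3 r0 \<beta> \<in> range (\<lambda>k. D\<zeta> (0, k, 0, 0))"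
proof -
  have "cross3 r0 \<beta> \<in> range Db" unfolding Db_range by (simp add: dot_cross_self)
  then obtain k where k: "cross3 r0 \<beta> = Db k" by blast
  have "D\<zeta> (0, k, 0, 0) = - lam0 *\<^sub>R cross3 r0 \<beta>"
    by (simp add: D\<zeta>_def D\<kappa>_def Dcos_def Dnorm_def Dchord_def linear_0[OF linear_Du] k[symmetric]
        dot_cross_self)
  thus ?thesis by (intro range_eqI[of _ _ k]) simp
qed

lemma r0_inner_D\<zeta>_v_direction: "r0 \<bullet> D\<zeta> (k, 0, 0, 0) = Du k \<bullet> \<zeta>0"
  unfolding D\<zeta>_def D\<kappa>_def Dcos_def Dnorm_def \<zeta>0_def \<kappa>0_def Dchord_def
  using \<rho>_pos r0_inner_self lam0
  by (simp add: inner_add_right inner_diff_right inner_diff_left inner_commute field_simps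
      power2_eq_square linear_0[OF linear_Db])

lemma cross_r0_\<beta>_nonzero: "cross3 r0 \<beta> \<noteq> 0"
proof
  assume "cross3 r0 \<beta> = 0"
  hence "(r0 \<bullet> \<beta>)\<^sup>2 = (norm r0 * norm \<beta>)\<^sup>2" using norm_cross_dot[of r0 \<beta>] by simp
  hence "\<rho>\<^sup>2 * c\<^sup>2 = \<rho>\<^sup>2 * 1"
    using r0_inner_\<beta> norm_b[OF w0] by (simp add: \<rho>_def \<beta>_def power_mult_distrib)
  thus False using \<rho>_pos c_square_less_1 by simp
qed

lemma D\<zeta>_onto_fixed_z: "\<exists>h. snd (snd (snd h)) = 0 \<and> D\<zeta> h = y"
proof -
  let ?Z = "D\<zeta> ` {h. snd (snd (snd h)) = 0}"
  have "subspace {h :: CI_parameter. snd (snd (snd h)) = 0}"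
    unfolding subspace_def by (auto simp: zero_prod_def)
  hence Z: "subspace ?Z" using linear_subspace_image has_derivative_linear[OF covector_derivative] by blast
  obtain k3 where k3: "Du k3 \<bullet> \<zeta>0 \<noteq> 0"
    using JT_u_\<zeta>0_nonzero unfolding JT_def Du_def by (auto simp: vec_eq_iff)
  have "- \<beta>_perp \<in> ?Z" by (rule image_eqI[where x="(0, 0, 1, 0)"]) (simp_all add: D\<zeta>_lam_direction)
  moreover have "- lam0 *\<^sub>R cross3 r0 \<beta> \<in> ?Z" using D\<zeta>_w_direction by auto
  moreover have "D\<zeta> (k3, 0, 0, 0) \<in> ?Z" by (rule imageI) simp
  ultimately have in_Z: "{- \<beta>_perp, - lam0 *\<^sub>R cross3 r0 \<beta>, D\<zeta> (k3, 0, 0, 0)} \<subseteq> ?Z" by blast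
  have "span {- \<beta>_perp, - lam0 *\<^sub>R cross3 r0 \<beta>, D\<zeta> (k3, 0, 0, 0)} = UNIV"
  proof (rule span_triple_eq_UNIV[where a=r0])
    show "r0 \<bullet> - \<beta>_perp = 0" using r0_inner_\<beta>_perp by simp
    show "r0 \<bullet> (- lam0 *\<^sub>R cross3 r0 \<beta>) = 0" by (simp add: dot_cross_self)
    show "- \<beta>_perp \<bullet> (- lam0 *\<^sub>R cross3 r0 \<beta>) = 0"
      by (simp add: \<beta>_perp_def inner_diff_left dot_cross_self)
    show "- \<beta>_perp \<noteq> 0" using \<beta>_perp_nonzero by simp
    show "- lam0 *\<^sub>R cross3 r0 \<beta> \<noteq> 0" using lam0 cross_r0_\<beta>_nonzero by simp
    show "r0 \<bullet> D\<zeta> (k3, 0, 0, 0) \<noteq> 0" using r0_inner_D\<zeta>_v_direction k3 by simp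
  qed
  hence "y \<in> ?Z" using span_minimal[OF in_Z Z] by blast
  thus ?thesis by blast
qed

lemma tangent_space_projections:
  defines "T \<equiv> tangent_vectors C (CI_chart u b p0)"
  shows "(\<lambda>q. fst (snd q)) ` T = UNIV" and "(\<lambda>q. fst (fst q)) ` T = UNIV"
    and "dim (snd ` T) = 6" and "dim (fst ` T) = 8"
proof -
  have T: "T = range F'" unfolding T_def tangent_space_eq_range_F' ..
  show "(\<lambda>q. fst (snd q)) ` T = UNIV"
  proof -
    have "a \<in> (\<lambda>q. fst (snd q)) ` T" for a
      unfolding T using F'_z[of "(0, 0, 0, a)"] by (intro image_eqI[of _ _ "F' (0, 0, 0, a)"]) auto
    thus ?thesis by auto
  qed
  show "(\<lambda>q. fst (fst q)) ` T = UNIV"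
  proof -
    have "(a1, a2, a3) \<in> (\<lambda>q. fst (fst q)) ` T" for a1 a2 a3
    proof -
      define k where "k = (a3 - D\<phi> (a1, a2, 0, 0)) / D\<phi> (0, 0, 0, \<beta>_perp)"
      define x :: CI_parameter where "x = (a1, a2, 0, 0) + k *\<^sub>R (0, 0, 0, \<beta>_perp)"
      have "D\<phi> x = D\<phi> (a1, a2, 0, 0) + k * D\<phi> (0, 0, 0, \<beta>_perp)"
        unfolding x_def by (simp only: linear_add[OF linear_D\<phi>] linear_scale[OF linear_D\<phi>] real_scaleR_def)
      hence "D\<phi> x = a3" unfolding k_def using D\<phi>_z_direction_nonzero by simp
      hence "fst (fst (F' x)) = (a1, a2, a3)" unfolding F'_base by (simp add: x_def)
      thus ?thesis unfolding T by (intro image_eqI[where x="F' x"]) auto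
    qed
    thus ?thesis by auto
  qed
  have "snd ` T = UNIV"
  proof -
    have "(z, y) \<in> snd ` T" for z y
    proof -
      obtain h where h: "snd (snd (snd h)) = 0" "D\<zeta> h = y - D\<zeta> (0, 0, 0, z)"
        using D\<zeta>_onto_fixed_z by blast
      have "snd (F' ((0, 0, 0, z) + h)) = (z, y)"
        using F'_z F'_\<zeta> h linear_add[OF has_derivative_linear[OF covector_derivative]]
        by (simp add: prod_eq_iff)
      thus ?thesis unfolding T by (intro image_eqI[where x="F' ((0, 0, 0, z) + h)"]) auto
    qed
    thus ?thesis by auto
  qed
  thus "dim (snd ` T) = 6" by simp
  have "fst ` T = range (\<lambda>h. fst (F' h))" unfolding T by auto
  also have "dim \<dots> = dim (UNIV :: CI_parameter set)"
    using dim_image_eq[OF linear_fst_F', of UNIV] inj_fst_F' by (auto simp: inj_on_def)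
  finally show "dim (fst ` T) = 8" by simp
qed

end

lemma CI_coords_tangent_projections:
  assumes "open M" and "surface_chart S U u" and "surface_chart (sphere 0 1) W b"
    and "tuy_condition S M" and "\<And>z x. z \<in> M \<Longrightarrow> x \<in> S \<Longrightarrow> z \<noteq> x" and "0 \<le> \<epsilon>"
    and p: "p \<in> CI_coords M \<epsilon> U u W b"
  defines "T \<equiv> tangent_vectors (CI_coords M \<epsilon> U u W b) p"
  shows "(\<lambda>q. fst (snd q)) ` T = UNIV \<and> (\<lambda>q. fst (fst q)) ` T = UNIV
    \<and> dim (snd ` T) = 3 + 3 \<and> dim (fst ` T) = 5 + 3"
proof -
  obtain v0 w0 \<phi>0 uh bh \<phi>h z0 \<zeta> lam0 where p_eq: "p = (((v0, w0, \<phi>0), (uh, bh, \<phi>h)), (z0, \<zeta>))"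
    and mem: "v0 \<in> U" "w0 \<in> W" "\<phi>0 \<in> {\<epsilon> <..< pi/2 - \<epsilon>}" "z0 \<in> M"
       "phase (u v0) (b w0) \<phi>0 z0 = 0" "lam0 \<noteq> 0"
       "\<zeta> = - lam0 *\<^sub>R (b w0 - (cos \<phi>0 / norm (z0 - u v0)) *\<^sub>R (z0 - u v0))"
       "uh = JT u v0 \<zeta>" "bh = lam0 *\<^sub>R JT b w0 (z0 - u v0)" "\<phi>h = lam0 * norm (z0 - u v0) * sin \<phi>0"
    using p unfolding CI_coords_def by blast
  interpret CI_point M S \<epsilon> U W u b v0 w0 \<phi>0 lam0 z0
    by unfold_locales (use assms mem in auto)
  have "p = CI_chart u b p0"
    unfolding CI_chart_p0 p_eq using mem by (simp add: \<zeta>0_def \<kappa>0_def c_def \<rho>_def r0_def \<beta>_def s_def)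
  hence "T = tangent_vectors C (CI_chart u b p0)" unfolding T_def C_def by simp
  thus ?thesis using tangent_space_projections by simp
qed

theorem mainTheorem12:
  fixes M S :: "(real^3) set" and \<epsilon> :: real
  assumes M_open: "open M" and M_conn: "connected M" and M_ne: "M \<noteq> {}"
    and S_surf: "regular_surface S" and S_ne: "S \<noteq> {}"
    and S_dist: "\<exists>d>0. \<forall>x\<in>S. \<forall>y\<in>closure M. d \<le> dist x y"
    and eps: "0 \<le> \<epsilon>" "\<epsilon> < pi/4"
    and tuy: "tuy_condition S M"
  shows "\<forall>U u W b. surface_chart S U u \<longrightarrow> surface_chart (sphere 0 1) W b \<longrightarrow>
     (\<forall>p \<in> CI_coords M \<epsilon> U u W b.
        let T = tangent_vectors (CI_coords M \<epsilon> U u W b) p in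
          (\<lambda>q. fst (snd q)) ` T = UNIV
        \<and> (\<lambda>q. fst (fst q)) ` T = UNIV
        \<and> dim (snd ` T) = 3 + 3
        \<and> dim (fst ` T) = 5 + 3)"
proof (intro allI impI ballI)
  fix U u W b p
  assume "surface_chart S U u" "surface_chart (sphere 0 1) W b" "p \<in> CI_coords M \<epsilon> U u W b"
  moreover have "z \<noteq> x" if "z \<in> M" "x \<in> S" for z x
  proof
    obtain d where d: "d > 0" "\<forall>x\<in>S. \<forall>y\<in>closure M. d \<le> dist x y" using S_dist by blast
    hence "d \<le> dist x z" using that closure_subset by blast
    moreover assume "z = x"
    ultimately show False using d(1) by simp
  qed
  ultimately show "let T = tangent_vectors (CI_coords M \<epsilon> U u W b) p in
      (\<lambda>q. fst (snd q)) ` T = UNIV \<and> (\<lambda>q. fst (fst q)) ` T = UNIV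
      \<and> dim (snd ` T) = 3 + 3 \<and> dim (fst ` T) = 5 + 3"
    unfolding Let_def using CI_coords_tangent_projections M_open tuy eps(1) by blast
qed

end
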